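(* Assume the bounded-cost assumption. Let agent $j\in[J]$ use POMWU with learning rate $\eta>0$, and let the contexts $Z_1,\dots,Z_T$, the predictions $\hat Z^j_1,\dots,\hat Z^j_T$ and the other agents' strategies be arbitrary. Then $$\mathrm{Reg}^j_T\le\frac{(5+\ln K)L^j_T+m\ln K}{\eta}+\eta\Big(\sum_{z\in\mathcal Z}\sum_{i=1}^{n_z}\big\|(\Phi^j_{z,i}-\Phi^j_{z,i-1})^\top z\big\|_\infty^2+4L^j_T\Big)-\frac{1}{16\eta}\sum_{z\in\mathcal Z}\sum_{i=1}^{n_z}\big\|w^j_{z,i}-w^j_{z,i-1}\big\|_1^2 .$$
   Context: Setting. There are $J\ge1$ agents indexed by $j\in[J]$. Agent $j$ has a finite action set $\mathcal A^j=\{a^j_1,\dots,a^j_K\}$ with $K$ elements; $\mathcal A=\prod_i\mathcal A^i$, $\mathcal A^{-j}=\prod_{i\ne j}\mathcal A^i$. $\Delta_K$ is the probability simplex in $\mathbb R^K$, $w\in\Delta_K$ identified with a distribution on $\mathcal A^j$; $\mathscr P(S)$ is the set of distributions on a finite set $S$. The context set $\mathcal Z=\{z_1,\dots,z_m\}\subset\mathbb R^d$ is finite with $m$ elements. Agent $j$ has $\phi^j:\mathcal A\to\mathbb R^d$ and cost $c^j(\mathbf w,Z)=\mathbb E_{\mathbf a\sim\mathbf w}[\langle\phi^j(\mathbf a),Z\rangle]$; $c^j(w,\mathbf w^{-j},Z)=c^j(w\otimes\mathbf w^{-j},Z)$. $\Phi^j(\mathbf w^{-j})\in\mathbb R^{d\times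 K}$ has entries $\Phi^j(\mathbf w^{-j})_{\ell,k}=\mathbb E_{\mathbf a^{-j}\sim\mathbf w^{-j}}[\phi^j(a^j_k,\mathbf a^{-j})[\ell]]$, so $c^j(w,\mathbf w^{-j},Z)=\langle Z,\Phi^j(\mathbf w^{-j})w\rangle$. Bounded-cost assumption: $|\langle Z,\phi^j(\mathbf a)\rangle|\le1$ for all $j,\mathbf a\in\mathcal A,Z\in\mathcal Z$. Game protocol: $T$ rounds, fixed sequence $Z_1,\dots,Z_T\in\mathcal Z$; at round $t$ each agent $j$ receives a prediction $\hat Z^j_t\in\mathcal Z$, plays $w^j_t\in\Delta_K$ as a function of past feedback and $\hat Z^j_t$, incurs $c^j(w^j_t,\mathbf w^{-j}_t,Z_t)$ with $\mathbf w^{-j}_t=\bigotimes_{i\ne j}w^i_t$, and observes $Z_t$ and $\Phi^j(\mathbf w^{-j}_t)$. $\mathscr T^z=\{t:Z_t=z\}=\{t^z_1<\dots<t^z_{n_z}\}$, $n_z=|\mathscr T^z|$; $L^j_T=\sum_{t=1}^T\mathbf 1\{\hat Z^j_t\ne Z_t\}$. Contextual external regret: $\mathrm{Reg}^j_T=\sum_{t=1}^Tc^j(w^j_t,\mathbf w^{-j}_t,Z_t)-\min_{\pi:\mathcal Z\to\Delta_K}\sum_{t=1}^Tc^j(\pi(Z_t),\mathbf w^{-j}_t,Z_t)$. POMWU with learning rate $\eta>0$ (for agent $j$): maintain for each $z\in\mathcal Z$ a vector $\rho_z\in\mathbb R^K_{>0}$, initialized to $(1/K,\dots,1/K)$, and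 a matrix $\Psi_z\in\mathbb R^{d\times K}$, initialized to $0$. At round $t$, with $\hat Z=\hat Z^j_t$, play $w^j_t[\ell]=\rho_{\hat Z}[\ell]\exp(-\eta(\Psi_{\hat Z}^\top\hat Z)[\ell])/\sum_{k=1}^K\rho_{\hat Z}[k]\exp(-\eta(\Psi_{\hat Z}^\top\hat Z)[k])$. After observing $Z_t$ and $\Phi_t=\Phi^j(\mathbf w^{-j}_t)$, set $\Psi_{Z_t}\leftarrow\Phi_t$ and $\rho_{Z_t}[\ell]\leftarrow\rho_{Z_t}[\ell]\exp(-\eta(\Phi_t^\top Z_t)[\ell])$ for all $\ell$. Notation: $\Phi^j_{z,i}=\Phi^j(\mathbf w^{-j}_{t^z_i})$, $w^j_{z,i}=w^j_{t^z_i}$ for $1\le i\le n_z$, with conventions $\Phi^j_{z,0}=0\in\mathbb R^{d\times K}$ and $w^j_{z,0}=(1/K,\dots,1/K)$. *)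

theory Defs
  imports "HOL-Analysis.Analysis"
begin

text \<open>Actions of every agent are indexed by 0,...,K-1; agents by 0,...,J-1; rounds by 0,...,T-1.
  A mixed strategy is a function nat => real, meaningful on {..<K}.
  Contexts are vectors in real^'d.\<close>

definition prob_simplex :: "nat \<Rightarrow> (nat \<Rightarrow> real) set" where
  "prob_simplex K = {w. (\<forall>k<K. 0 \<le> w k) \<and> (\<Sum>k<K. w k) = 1}"

definition profiles :: "nat \<Rightarrow> nat \<Rightarrow> (nat \<Rightarrow> nat) set" where
  "profiles J K = PiE {..<J} (\<lambda>_. {..<K})"

text \<open>The matrix Phi^j(w^{-j}) given by its K columns (each in real^'d):
  column k is E_{a^{-j} ~ w^{-j}} [phi^j(a^j_k, a^{-j})], where W i is the mixed
  strategy of agent i (only i ~= j is used).\<close>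
definition Phi_mat :: "nat \<Rightarrow> nat \<Rightarrow> (nat \<Rightarrow> (nat \<Rightarrow> nat) \<Rightarrow> real^'d) \<Rightarrow> nat
    \<Rightarrow> (nat \<Rightarrow> nat \<Rightarrow> real) \<Rightarrow> nat \<Rightarrow> real^'d" where
  "Phi_mat J K \<phi> j W k =
     (\<Sum>a\<in>{a\<in>profiles J K. a j = k}. (\<Prod>i\<in>{..<J} - {j}. W i (a i)) *\<^sub>R \<phi> j a)"

definition lincost :: "nat \<Rightarrow> (nat \<Rightarrow> real^'d) \<Rightarrow> (nat \<Rightarrow> real) \<Rightarrow> real^'d \<Rightarrow> real" where
  "lincost K Phi w Z = (\<Sum>k<K. w k * (Phi k \<bullet> Z))"

definition contextual_regret :: "nat \<Rightarrow> (real^'d) set \<Rightarrow> nat \<Rightarrow> (nat \<Rightarrow> real^'d)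
    \<Rightarrow> (nat \<Rightarrow> nat \<Rightarrow> real^'d) \<Rightarrow> (nat \<Rightarrow> nat \<Rightarrow> real) \<Rightarrow> real" where
  "contextual_regret K Zset T Zs Phis wj =
     (\<Sum>t<T. lincost K (Phis t) (wj t) (Zs t))
     - (INF \<pi>\<in>{\<pi>. \<forall>z\<in>Zset. \<pi> z \<in> prob_simplex K}. \<Sum>t<T. lincost K (Phis t) (\<pi> (Zs t)) (Zs t))"

text \<open>POMWU state (rho, Psi) before round t, i.e. after the updates of rounds 0..t-1.\<close>
fun pomwu_state :: "real \<Rightarrow> nat \<Rightarrow> (nat \<Rightarrow> real^'d) \<Rightarrow> (nat \<Rightarrow> nat \<Rightarrow> real^'d) \<Rightarrow> nat
    \<Rightarrow> (real^'d \<Rightarrow> nat \<Rightarrow> real) \<times> (real^'d \<Rightarrow> nat \<Rightarrow> real^'d)" where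
  "pomwu_state \<eta> K Zs Phis 0 = ((\<lambda>z l. 1 / real K), (\<lambda>z l. 0))"
| "pomwu_state \<eta> K Zs Phis (Suc t) =
     (case pomwu_state \<eta> K Zs Phis t of (\<rho>, \<Psi>) \<Rightarrow>
        (\<rho>(Zs t := (\<lambda>l. \<rho> (Zs t) l * exp (- \<eta> * (Phis t l \<bullet> Zs t)))),
         \<Psi>(Zs t := Phis t)))"

definition pomwu_weights :: "real \<Rightarrow> nat \<Rightarrow> (nat \<Rightarrow> real^'d) \<Rightarrow> (nat \<Rightarrow> nat \<Rightarrow> real^'d)
    \<Rightarrow> (nat \<Rightarrow> real^'d) \<Rightarrow> nat \<Rightarrow> nat \<Rightarrow> real" where
  "pomwu_weights \<eta> K Zs Phis Zhat t l =
     (case pomwu_state \<eta> K Zs Phis t of (\<rho>, \<Psi>) \<Rightarrow>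
        \<rho> (Zhat t) l * exp (- \<eta> * (\<Psi> (Zhat t) l \<bullet> Zhat t))
        / (\<Sum>k<K. \<rho> (Zhat t) k * exp (- \<eta> * (\<Psi> (Zhat t) k \<bullet> Zhat t))))"

text \<open>The rounds t^z_1 < ... < t^z_{n_z} (0-based list) at which context z occurs.\<close>
definition occ_rounds :: "nat \<Rightarrow> (nat \<Rightarrow> 'a) \<Rightarrow> 'a \<Rightarrow> nat list" where
  "occ_rounds T Zs z = sorted_list_of_set {t. t < T \<and> Zs t = z}"

text \<open>x_{z,i}: value at the i-th occurrence (1-based), with x_{z,0} = init.\<close>
definition at_occ :: "(nat \<Rightarrow> 'b) \<Rightarrow> 'b \<Rightarrow> nat list \<Rightarrow> nat \<Rightarrow> 'b" where
  "at_occ f init ts i = (if i = 0 then init else f (ts ! (i - 1)))"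

definition linf_norm :: "nat \<Rightarrow> (nat \<Rightarrow> real) \<Rightarrow> real" where
  "linf_norm K v = Max ((\<lambda>k. \<bar>v k\<bar>) ` {..<K})"

definition l1_norm :: "nat \<Rightarrow> (nat \<Rightarrow> real) \<Rightarrow> real" where
  "l1_norm K v = (\<Sum>k<K. \<bar>v k\<bar>)"

end

theory Submission
  imports Defs
begin

text \<open>For each context \<open>z\<close> the rounds with \<open>Z\<^sub>t = z\<close> form a separate instance: whenever
  the prediction is correct, POMWU plays there exactly optimistic Hedge on the loss vectors
  \<open>l\<^sub>i = \<Phi>\<^sub>z\<^sub>,\<^sub>i\<^sup>T z\<close>, with \<open>l\<^sub>i\<^sub>-\<^sub>1\<close> as the guess for \<open>l\<^sub>i\<close>. Optimistic Hedge satisfies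
  the RVU bound
  \<open>ln K / \<eta> + \<eta> \<Sum> \<parallel>l\<^sub>i - l\<^sub>i\<^sub>-\<^sub>1\<parallel>\<^sub>\<infinity>\<^sup>2 - (1 / 8\<eta>) \<Sum> \<parallel>x\<^sub>i - x\<^sub>i\<^sub>-\<^sub>1\<parallel>\<^sub>1\<^sup>2\<close>,
  which follows from the KL-divergence identities of softmax iterates together with Hoelder,
  Young and Pinsker. A round with a wrong prediction costs at most \<open>2\<close> in regret and \<open>4\<close> in
  each adjacent movement term, which is absorbed by the terms proportional to \<open>L\<close>. Since the
  comparator policy is optimized separately in every context, summing over the \<open>m\<close> contexts
  gives the bound.\<close>

section \<open>Pinsker's inequality\<close>

lemma mono_on_ln_minus_rational:
  "mono_on {0<..} (\<lambda>x::real. ln x - 3 * (x - 1) * (x + 5) / (2 * (x + 2)^2))"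
proof -
  define k where "k = (\<lambda>x::real. ln x - 3 * (x - 1) * (x + 5) / (2 * (x + 2)^2))"
  have deriv: "(k has_real_derivative 1 / x - 27 / (x + 2)^3) (at x)" if "0 < x" for x
  proof -
    have "(k has_real_derivative
        1 / x - (3 * ((x + 5) + (x - 1)) * (2 * (x + 2)^2) - 3 * (x - 1) * (x + 5) * (2 * (2 * (x + 2))))
          / (2 * (x + 2)^2)^2) (at x)"
      unfolding k_def using that by (auto intro!: derivative_eq_intros simp: power2_eq_square)
    moreover have "(3 * ((x + 5) + (x - 1)) * (2 * (x + 2)^2) - 3 * (x - 1) * (x + 5) * (2 * (2 * (x + 2))))
        / (2 * (x + 2)^2)^2 = 27 / (x + 2)^3"
      using that by (simp add: divide_simps)
        (simp add: algebra_simps power2_eq_square power3_eq_cube eval_nat_numeral)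
    ultimately show ?thesis by simp
  qed
  have nonneg: "0 \<le> 1 / x - 27 / (x + 2)^3" if "0 < x" for x :: real
  proof -
    have "(x + 2)^3 - 27 * x = (x - 1)^2 * (x + 8)"
      by (simp add: power2_eq_square power3_eq_cube algebra_simps)
    moreover have "0 \<le> (x - 1)^2 * (x + 8)" using that by simp
    ultimately have "27 * x \<le> (x + 2)^3" by linarith
    then show ?thesis using that by (simp add: field_simps)
  qed
  have "mono_on {0<..} k"
    by (rule mono_onI, rule deriv_nonneg_imp_mono[where g' = "\<lambda>x. 1 / x - 27 / (x + 2)^3"])
      (use deriv nonneg in auto)
  then show ?thesis by (simp add: k_def)
qed

text \<open>The refinement of \<open>x ln x - x + 1 \<ge> 0\<close> from which Pinsker's inequality follows.\<close>
lemma x_ln_x_lower_bound: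
  fixes x :: real assumes "0 < x"
  shows "3 * (x - 1)^2 / (2 * (x + 2)) \<le> x * ln x - x + 1"
proof -
  define g where "g x = x * ln x - x + 1 - 3 * (x - 1)^2 / (2 * (x + 2))" for x :: real
  define g' where "g' x = ln x - 3 * (x - 1) * (x + 5) / (2 * (x + 2)^2)" for x :: real
  have deriv: "(g has_real_derivative g' x) (at x)" if "0 < x" for x
  proof -
    have "(g has_real_derivative 1 * ln x + x * (1 / x) - 1
        - (3 * (2 * (x - 1)) * (2 * (x + 2)) - 3 * (x - 1)^2 * 2) / (2 * (x + 2))^2) (at x)"
      unfolding g_def using that by (auto intro!: derivative_eq_intros simp: power2_eq_square)
    moreover have "1 * ln x + x * (1 / x) - 1
        - (3 * (2 * (x - 1)) * (2 * (x + 2)) - 3 * (x - 1)^2 * 2) / (2 * (x + 2))^2 = g' x"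
      unfolding g'_def using that by (simp add: divide_simps) (simp add: algebra_simps power2_eq_square)
    ultimately show ?thesis by simp
  qed
  have g'_nonneg: "0 \<le> g' y" if "1 \<le> y" for y
    using mono_onD[OF mono_on_ln_minus_rational, of 1 y] that by (simp add: g'_def)
  have g'_nonpos: "g' y \<le> 0" if "0 < y" "y \<le> 1" for y
    using mono_onD[OF mono_on_ln_minus_rational, of y 1] that by (simp add: g'_def)
  have "g 1 \<le> g x"
  proof (cases "1 \<le> x")
    case True
    show ?thesis by (rule deriv_nonneg_imp_mono[where g' = g']) (use deriv g'_nonneg True in auto)
  next
    case False
    show ?thesis by (rule deriv_nonpos_imp_antimono[where g' = g']) (use deriv g'_nonpos False assms in auto)
  qed
  then show ?thesis by (simp add: g_def)
qed

lemma p_ln_p_div_q_lower_bound: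
  fixes p q :: real assumes "0 < p" "0 < q"
  shows "3 * (p - q)^2 / (2 * (p + 2 * q)) \<le> p * ln (p / q) - p + q"
proof -
  have "q * (3 * (p / q - 1)^2 / (2 * (p / q + 2))) \<le> q * (p / q * ln (p / q) - p / q + 1)"
    using x_ln_x_lower_bound[of "p / q"] assms by (intro mult_left_mono) auto
  moreover have "p / q - 1 = (p - q) / q" "p / q + 2 = (p + 2 * q) / q"
    using assms by (auto simp: field_simps)
  then have "q * (3 * (p / q - 1)^2 / (2 * (p / q + 2))) = 3 * (p - q)^2 / (2 * (p + 2 * q))"
    using assms by (simp add: power2_eq_square divide_simps)
  moreover have "q * (p / q * ln (p / q) - p / q + 1) = p * ln (p / q) - p + q"
    using assms by (simp add: field_simps)
  ultimately show ?thesis by simp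
qed

definition softmax :: "nat \<Rightarrow> (nat \<Rightarrow> real) \<Rightarrow> nat \<Rightarrow> real" where
  "softmax K v k = exp (v k) / (\<Sum>k'<K. exp (v k'))"

definition log_sum_exp :: "nat \<Rightarrow> (nat \<Rightarrow> real) \<Rightarrow> real" where
  "log_sum_exp K v = ln (\<Sum>k<K. exp (v k))"

definition kl_div :: "nat \<Rightarrow> (nat \<Rightarrow> real) \<Rightarrow> (nat \<Rightarrow> real) \<Rightarrow> real" where
  "kl_div K p q = (\<Sum>k<K. p k * ln (p k / q k))"

definition dot_prod :: "nat \<Rightarrow> (nat \<Rightarrow> real) \<Rightarrow> (nat \<Rightarrow> real) \<Rightarrow> real" where
  "dot_prod K a b = (\<Sum>k<K. a k * b k)"

text \<open>Pinsker's inequality: sum the previous bound with the weights \<open>c k = 2 (p k + 2 q k) / 3\<close>,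
  which add up to \<open>2\<close>, and use \<open>2 t \<bar>a\<bar> - t\<^sup>2 c \<le> a\<^sup>2 / c\<close> with \<open>t = \<parallel>p - q\<parallel>\<^sub>1 / 2\<close>.\<close>
lemma pinsker_inequality:
  assumes "\<And>k. k < K \<Longrightarrow> 0 < p k" "\<And>k. k < K \<Longrightarrow> 0 < q k"
    and "(\<Sum>k<K. p k) = 1" "(\<Sum>k<K. q k) = 1"
  shows "(l1_norm K (\<lambda>k. p k - q k))^2 / 2 \<le> kl_div K p q"
proof -
  define t where "t = l1_norm K (\<lambda>k. p k - q k) / 2"
  define c where "c k = 2 * (p k + 2 * q k) / 3" for k
  have "(\<Sum>k<K. c k) = 2"
    using assms(3,4) unfolding c_def
    by (simp add: sum_divide_distrib[symmetric] sum.distrib sum_distrib_left[symmetric])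
  moreover have "(\<Sum>k<K. 2 * t * \<bar>p k - q k\<bar> - t^2 * c k)
      = 2 * t * l1_norm K (\<lambda>k. p k - q k) - t^2 * (\<Sum>k<K. c k)"
    unfolding l1_norm_def by (simp add: sum_subtractf sum_distrib_left)
  ultimately have "(l1_norm K (\<lambda>k. p k - q k))^2 / 2 = (\<Sum>k<K. 2 * t * \<bar>p k - q k\<bar> - t^2 * c k)"
    unfolding t_def by (simp add: power2_eq_square)
  also have "\<dots> \<le> (\<Sum>k<K. p k * ln (p k / q k) - p k + q k)"
  proof (rule sum_mono)
    fix k assume "k \<in> {..<K}"
    then have pq: "0 < p k" "0 < q k" using assms by auto
    then have "0 < c k" by (simp add: c_def)
    have "0 \<le> (\<bar>p k - q k\<bar> - t * c k)^2" by simp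
    then have "(2 * t * \<bar>p k - q k\<bar> - t^2 * c k) * c k \<le> (p k - q k)^2"
      by (simp add: power2_eq_square algebra_simps)
    then have "2 * t * \<bar>p k - q k\<bar> - t^2 * c k \<le> 3 * (p k - q k)^2 / (2 * (p k + 2 * q k))"
      using \<open>0 < c k\<close> by (simp add: c_def field_simps)
    also have "\<dots> \<le> p k * ln (p k / q k) - p k + q k"
      using p_ln_p_div_q_lower_bound pq by blast
    finally show "2 * t * \<bar>p k - q k\<bar> - t^2 * c k \<le> p k * ln (p k / q k) - p k + q k" .
  qed
  also have "\<dots> = kl_div K p q"
    unfolding kl_div_def using assms(3,4) by (simp add: sum.distrib sum_subtractf)
  finally show ?thesis .
qed

section \<open>Softmax distributions and norms\<close>

lemma sum_exp_pos: "1 \<le> (K::nat) \<Longrightarrow> 0 < (\<Sum>k<K. exp (v k :: real))"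
  by (intro sum_pos) (auto simp: lessThan_empty_iff)

lemma softmax_pos: "1 \<le> K \<Longrightarrow> 0 < softmax K v k"
  unfolding softmax_def by (intro divide_pos_pos sum_exp_pos) auto

lemma sum_softmax: "1 \<le> K \<Longrightarrow> (\<Sum>k<K. softmax K v k) = 1"
  unfolding softmax_def using sum_exp_pos[of K v] by (simp add: sum_divide_distrib[symmetric])

lemma softmax_in_prob_simplex: "1 \<le> K \<Longrightarrow> softmax K v \<in> prob_simplex K"
  unfolding prob_simplex_def using sum_softmax softmax_pos by (auto intro: less_imp_le)

lemma softmax_const: "1 \<le> K \<Longrightarrow> softmax K (\<lambda>_. c) = (\<lambda>_. 1 / real K)"
  unfolding softmax_def by auto

lemma ln_softmax: "1 \<le> K \<Longrightarrow> ln (softmax K v k) = v k - log_sum_exp K v"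
  unfolding softmax_def log_sum_exp_def using sum_exp_pos[of K v] by (simp add: ln_div)

lemma kl_div_softmax:
  assumes "1 \<le> K"
  shows "kl_div K (softmax K a) (softmax K b)
    = dot_prod K (softmax K a) (\<lambda>k. a k - b k) - log_sum_exp K a + log_sum_exp K b"
proof -
  have ln_ratio: "ln (softmax K a k / softmax K b k) = a k - b k - log_sum_exp K a + log_sum_exp K b" for k
    using softmax_pos[OF assms, of a k] softmax_pos[OF assms, of b k] by (simp add: ln_div ln_softmax[OF assms])
  have "kl_div K (softmax K a) (softmax K b)
      = (\<Sum>k<K. softmax K a k * (a k - b k) + (log_sum_exp K b - log_sum_exp K a) * softmax K a k)"
    unfolding kl_div_def ln_ratio by (intro sum.cong) (simp_all add: algebra_simps)
  also have "\<dots> = dot_prod K (softmax K a) (\<lambda>k. a k - b k) + (log_sum_exp K b - log_sum_exp K a)"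
    by (simp add: sum.distrib dot_prod_def sum_distrib_left[symmetric] sum_softmax[OF assms])
  finally show ?thesis by simp
qed

lemma pinsker_softmax:
  "1 \<le> K \<Longrightarrow> (l1_norm K (\<lambda>k. softmax K a k - softmax K b k))^2 / 2 \<le> kl_div K (softmax K a) (softmax K b)"
  by (rule pinsker_inequality) (simp_all add: softmax_pos sum_softmax)

lemma neg_log_sum_exp_le_dot_prod:
  assumes K: "1 \<le> K" and eta: "0 < \<eta>" and u: "u \<in> prob_simplex K"
  shows "- log_sum_exp K (\<lambda>k. - \<eta> * c k) / \<eta> \<le> dot_prod K c u"
proof -
  have min_le: "- log_sum_exp K (\<lambda>k. - \<eta> * c k) / \<eta> \<le> c k" if "k < K" for k
  proof -
    have "exp (- \<eta> * c k) \<le> (\<Sum>k<K. exp (- \<eta> * c k))"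
      by (rule member_le_sum) (use that in auto)
    then have "- \<eta> * c k \<le> log_sum_exp K (\<lambda>k. - \<eta> * c k)"
      unfolding log_sum_exp_def using sum_exp_pos[OF K] by (subst ln_ge_iff) auto
    then show ?thesis using eta by (simp add: field_simps)
  qed
  define lb where "lb = - log_sum_exp K (\<lambda>k. - \<eta> * c k) / \<eta>"
  have "lb = (\<Sum>k<K. lb * u k)"
    using u unfolding prob_simplex_def by (simp add: sum_distrib_left[symmetric])
  also have "\<dots> \<le> (\<Sum>k<K. c k * u k)"
    using u min_le unfolding prob_simplex_def lb_def[symmetric]
    by (intro sum_mono mult_right_mono) auto
  finally show ?thesis unfolding dot_prod_def lb_def .
qed

lemma linf_norm_ge: "k < K \<Longrightarrow> \<bar>f k\<bar> \<le> linf_norm K f"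
  unfolding linf_norm_def by (intro Max_ge) auto

lemma l1_norm_nonneg: "0 \<le> l1_norm K f"
  unfolding l1_norm_def by (simp add: sum_nonneg)

lemma dot_prod_le_linf_l1: "dot_prod K f g \<le> linf_norm K f * l1_norm K g"
proof -
  have "f k * g k \<le> linf_norm K f * \<bar>g k\<bar>" if "k < K" for k
    using mult_right_mono[OF linf_norm_ge[OF that, of f] abs_ge_zero[of "g k"]]
    by (simp add: abs_mult[symmetric] abs_le_iff)
  then show ?thesis unfolding dot_prod_def l1_norm_def sum_distrib_left by (intro sum_mono) auto
qed

lemma l1_norm_triangle:
  "l1_norm K (\<lambda>k. x k - y k) \<le> l1_norm K (\<lambda>k. x k - g k) + l1_norm K (\<lambda>k. y k - g k)"
  unfolding l1_norm_def sum.distrib[symmetric] by (rule sum_mono) linarith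

lemma l1_norm_diff_prob_simplex_le:
  assumes "p \<in> prob_simplex K" "q \<in> prob_simplex K"
  shows "l1_norm K (\<lambda>k. p k - q k) \<le> 2"
proof -
  have "\<bar>p k - q k\<bar> \<le> p k + q k" if "k < K" for k
    using assms that unfolding prob_simplex_def by (fastforce simp: abs_if)
  then have "l1_norm K (\<lambda>k. p k - q k) \<le> (\<Sum>k<K. p k + q k)"
    unfolding l1_norm_def by (intro sum_mono) auto
  also have "\<dots> = 2" using assms unfolding prob_simplex_def by (simp add: sum.distrib)
  finally show ?thesis .
qed

lemma mult_le_weighted_squares:
  fixes a b \<eta> :: real assumes "0 < \<eta>"
  shows "a * b \<le> \<eta> * a^2 + b^2 / (4 * \<eta>)"
proof -
  have "0 \<le> (2 * \<eta> * a - b)^2" by simp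
  then have "4 * \<eta> * (a * b) \<le> 4 * \<eta> * (\<eta> * a^2 + b^2 / (4 * \<eta>))"
    using assms by (simp add: power2_eq_square algebra_simps)
  then show ?thesis using assms by simp
qed

lemma square_le_of_le_add:
  fixes a b c :: real assumes "0 \<le> c" "c \<le> a + b"
  shows "c^2 \<le> 2 * a^2 + 2 * b^2"
proof -
  have "c^2 \<le> (a + b)^2" using assms by (simp add: power_mono)
  also have "\<dots> \<le> 2 * a^2 + 2 * b^2" using sum_squares_ge_zero[of "a - b" 0]
    by (simp add: power2_eq_square algebra_simps)
  finally show ?thesis .
qed

section \<open>Optimistic Hedge\<close>

text \<open>One step of optimistic Hedge: \<open>C\<close> is the cumulative loss so far, \<open>m\<close> the prediction
  of the next loss \<open>l\<close>. The two KL divergences of the softmax iterates telescope against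
  \<open>log_sum_exp\<close>, and Pinsker's inequality turns them into the negative movement terms.\<close>
lemma opt_hedge_step:
  fixes C m l :: "nat \<Rightarrow> real"
  assumes K: "1 \<le> K" and eta: "0 < \<eta>"
  defines "x \<equiv> softmax K (\<lambda>k. - \<eta> * (C k + m k))"
    and "g \<equiv> softmax K (\<lambda>k. - \<eta> * C k)"
    and "g' \<equiv> softmax K (\<lambda>k. - \<eta> * (C k + l k))"
  shows "dot_prod K l x
      + (log_sum_exp K (\<lambda>k. - \<eta> * (C k + l k)) - log_sum_exp K (\<lambda>k. - \<eta> * C k)) / \<eta>
    \<le> \<eta> * (linf_norm K (\<lambda>k. l k - m k))^2
      - (l1_norm K (\<lambda>k. x k - g' k))^2 / (4 * \<eta>) - (l1_norm K (\<lambda>k. x k - g k))^2 / (2 * \<eta>)"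
proof -
  define A where "A = (l1_norm K (\<lambda>k. x k - g k))^2"
  define B where "B = (l1_norm K (\<lambda>k. x k - g' k))^2"
  define kl where "kl = kl_div K g' x + kl_div K x g"
  have "kl_div K g' x = - \<eta> * dot_prod K g' (\<lambda>k. l k - m k)
      - log_sum_exp K (\<lambda>k. - \<eta> * (C k + l k)) + log_sum_exp K (\<lambda>k. - \<eta> * (C k + m k))"
    unfolding g'_def x_def kl_div_softmax[OF K] dot_prod_def
    by (simp add: algebra_simps sum_distrib_left sum_subtractf sum_negf)
  moreover have "kl_div K x g = - \<eta> * dot_prod K x m
      - log_sum_exp K (\<lambda>k. - \<eta> * (C k + m k)) + log_sum_exp K (\<lambda>k. - \<eta> * C k)"
    unfolding g_def x_def kl_div_softmax[OF K] dot_prod_def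
    by (simp add: algebra_simps sum_distrib_left)
  ultimately have lse_diff: "(log_sum_exp K (\<lambda>k. - \<eta> * (C k + l k)) - log_sum_exp K (\<lambda>k. - \<eta> * C k)) / \<eta>
      = - dot_prod K g' (\<lambda>k. l k - m k) - dot_prod K x m - kl / \<eta>"
    unfolding kl_def using eta by (simp add: field_simps)
  have "B = (l1_norm K (\<lambda>k. g' k - x k))^2"
    unfolding B_def l1_norm_def by (simp add: abs_minus_commute)
  then have "B / 2 \<le> kl_div K g' x"
    unfolding g'_def x_def by (simp only: pinsker_softmax[OF K])
  moreover have "A / 2 \<le> kl_div K x g"
    unfolding A_def g_def x_def by (rule pinsker_softmax[OF K])
  ultimately have "(A + B) / 2 / \<eta> \<le> kl / \<eta>"
    unfolding kl_def using eta by (intro divide_right_mono) auto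
  moreover have "dot_prod K l x - dot_prod K g' (\<lambda>k. l k - m k) - dot_prod K x m
      = dot_prod K (\<lambda>k. l k - m k) (\<lambda>k. x k - g' k)"
    unfolding dot_prod_def by (simp add: algebra_simps sum_subtractf sum.distrib)
  moreover have "dot_prod K (\<lambda>k. l k - m k) (\<lambda>k. x k - g' k) \<le> \<eta> * (linf_norm K (\<lambda>k. l k - m k))^2 + B / (4 * \<eta>)"
    using dot_prod_le_linf_l1 mult_le_weighted_squares[OF eta] unfolding B_def by (rule order_trans)
  moreover have "(A + B) / 2 / \<eta> = A / (2 * \<eta>) + 2 * (B / (4 * \<eta>))"
    by (simp add: add_divide_distrib)
  ultimately show ?thesis unfolding lse_diff A_def[symmetric] B_def[symmetric] by linarith
qed

definition cum_loss :: "(nat \<Rightarrow> nat \<Rightarrow> real) \<Rightarrow> nat \<Rightarrow> nat \<Rightarrow> real" where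
  "cum_loss l n k = (\<Sum>i=1..n. l i k)"

definition hedge :: "real \<Rightarrow> nat \<Rightarrow> (nat \<Rightarrow> nat \<Rightarrow> real) \<Rightarrow> nat \<Rightarrow> nat \<Rightarrow> real" where
  "hedge \<eta> K l n = softmax K (\<lambda>k. - \<eta> * cum_loss l n k)"

text \<open>In round \<open>i \<ge> 1\<close> the losses \<open>l 1, \<dots>, l (i - 1)\<close> are known and \<open>l (i - 1)\<close> serves as the
  prediction of \<open>l i\<close>; the truncated subtraction makes iterate \<open>0\<close> equal to iterate \<open>1\<close>.\<close>
definition opt_hedge :: "real \<Rightarrow> nat \<Rightarrow> (nat \<Rightarrow> nat \<Rightarrow> real) \<Rightarrow> nat \<Rightarrow> nat \<Rightarrow> real" where
  "opt_hedge \<eta> K l i = softmax K (\<lambda>k. - \<eta> * (cum_loss l (i - 1) k + l (i - 1) k))"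

definition linf_variation :: "nat \<Rightarrow> (nat \<Rightarrow> nat \<Rightarrow> real) \<Rightarrow> nat \<Rightarrow> real" where
  "linf_variation K l n = (\<Sum>i=1..n. (linf_norm K (\<lambda>k. l i k - l (i - 1) k))^2)"

definition l1_variation :: "nat \<Rightarrow> (nat \<Rightarrow> nat \<Rightarrow> real) \<Rightarrow> nat \<Rightarrow> real" where
  "l1_variation K x n = (\<Sum>i=1..n. (l1_norm K (\<lambda>k. x i k - x (i - 1) k))^2)"

lemma cum_loss_Suc: "cum_loss l (Suc n) k = cum_loss l n k + l (Suc n) k"
  unfolding cum_loss_def by simp

lemma opt_hedge_in_prob_simplex: "1 \<le> K \<Longrightarrow> opt_hedge \<eta> K l i \<in> prob_simplex K"
  unfolding opt_hedge_def by (rule softmax_in_prob_simplex)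

lemma l1_variation_nonneg: "0 \<le> l1_variation K x n"
  unfolding l1_variation_def by (simp add: sum_nonneg)

lemma sum_atLeast1_shift_le:
  fixes f :: "nat \<Rightarrow> real"
  assumes "f 0 = 0" "\<And>i. 0 \<le> f i"
  shows "(\<Sum>i=1..n. f (i - 1)) \<le> (\<Sum>i=1..n. f i)"
proof -
  have "(\<Sum>i=1..n. f (i - 1)) = (\<Sum>i<n. f i)"
    using sum.atLeast1_atMost_eq[of "\<lambda>i. f (i - 1)" n] by simp
  also have "\<dots> \<le> (\<Sum>i<Suc n. f i)"
    using assms(2) by simp
  also have "\<dots> = (\<Sum>i=1..n. f i)"
    using sum.lessThan_Suc_shift[of f n] sum.atLeast1_atMost_eq[of f n] assms(1) by simp
  finally show ?thesis .
qed

lemma linf_norm_le: "1 \<le> K \<Longrightarrow> (\<And>k. k < K \<Longrightarrow> \<bar>f k\<bar> \<le> c) \<Longrightarrow> linf_norm K f \<le> c"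
  unfolding linf_norm_def by (intro Max.boundedI) (auto simp: lessThan_empty_iff)

text \<open>Triangle inequality through the plain Hedge iterate \<open>hedge \<eta> K l (i - 1)\<close>.\<close>
lemma l1_variation_opt_hedge_le:
  assumes init: "\<And>k. l 0 k = 0"
  shows "l1_variation K (opt_hedge \<eta> K l) n
    \<le> 2 * (\<Sum>i=1..n. (l1_norm K (\<lambda>k. opt_hedge \<eta> K l i k - hedge \<eta> K l (i - 1) k))^2)
      + 2 * (\<Sum>i=1..n. (l1_norm K (\<lambda>k. opt_hedge \<eta> K l i k - hedge \<eta> K l i k))^2)"
proof -
  define x where "x = opt_hedge \<eta> K l"
  define g where "g = hedge \<eta> K l"
  define A where "A i = (l1_norm K (\<lambda>k. x i k - g (i - 1) k))^2" for i
  define B where "B i = (l1_norm K (\<lambda>k. x i k - g i k))^2" for i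
  have "(l1_norm K (\<lambda>k. x i k - x (i - 1) k))^2 \<le> 2 * A i + 2 * B (i - 1)" if "1 \<le> i" for i
    using that l1_norm_triangle[of K "x i" "x (i - 1)" "g (i - 1)"]
    by (intro square_le_of_le_add[of _ "l1_norm K (\<lambda>k. x i k - g (i - 1) k)", THEN order_trans])
      (auto simp: A_def B_def l1_norm_nonneg)
  then have "l1_variation K x n \<le> (\<Sum>i=1..n. 2 * A i + 2 * B (i - 1))"
    unfolding l1_variation_def by (intro sum_mono) auto
  also have "\<dots> \<le> 2 * (\<Sum>i=1..n. A i) + 2 * (\<Sum>i=1..n. B i)"
  proof -
    have "x 0 = g 0" by (simp add: x_def g_def opt_hedge_def hedge_def init)
    then have "(\<Sum>i=1..n. B (i - 1)) \<le> (\<Sum>i=1..n. B i)"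
      by (intro sum_atLeast1_shift_le) (simp_all add: B_def l1_norm_def)
    then show ?thesis by (simp add: sum.distrib sum_distrib_left[symmetric])
  qed
  finally show ?thesis unfolding x_def g_def A_def B_def .
qed

lemma opt_hedge_regret:
  assumes K: "1 \<le> K" and eta: "0 < \<eta>" and u: "u \<in> prob_simplex K" and init: "\<And>k. l 0 k = 0"
  shows "(\<Sum>i=1..n. dot_prod K (l i) (\<lambda>k. opt_hedge \<eta> K l i k - u k))
    \<le> ln (real K) / \<eta> + \<eta> * linf_variation K l n - l1_variation K (opt_hedge \<eta> K l) n / (8 * \<eta>)"
proof -
  define x where "x = opt_hedge \<eta> K l"
  define g where "g = hedge \<eta> K l"
  define \<Phi> where "\<Phi> n = log_sum_exp K (\<lambda>k. - \<eta> * cum_loss l n k)" for n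
  define A where "A i = (l1_norm K (\<lambda>k. x i k - g (i - 1) k))^2" for i
  define B where "B i = (l1_norm K (\<lambda>k. x i k - g i k))^2" for i
  have step: "dot_prod K (l i) (x i) + (\<Phi> i - \<Phi> (i - 1)) / \<eta>
      \<le> \<eta> * (linf_norm K (\<lambda>k. l i k - l (i - 1) k))^2 - B i / (4 * \<eta>) - A i / (2 * \<eta>)"
    if "1 \<le> i" for i
  proof -
    have "cum_loss l i k = cum_loss l (i - 1) k + l i k" for k
      using cum_loss_Suc[of l "i - 1" k] that by simp
    then show ?thesis
      using opt_hedge_step[OF K eta, where C = "cum_loss l (i - 1)" and m = "l (i - 1)" and l = "l i"]
      unfolding x_def g_def \<Phi>_def A_def B_def opt_hedge_def hedge_def by simp
  qed
  have "(\<Sum>i=1..n. \<Phi> i - \<Phi> (i - 1)) = \<Phi> n - \<Phi> 0"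
    by (induction n) auto
  moreover have "(\<Sum>i=1..n. dot_prod K (l i) (x i) + (\<Phi> i - \<Phi> (i - 1)) / \<eta>)
      \<le> (\<Sum>i=1..n. \<eta> * (linf_norm K (\<lambda>k. l i k - l (i - 1) k))^2 - B i / (4 * \<eta>) - A i / (2 * \<eta>))"
    using step by (intro sum_mono) auto
  ultimately have learner: "(\<Sum>i=1..n. dot_prod K (l i) (x i)) + (\<Phi> n - \<Phi> 0) / \<eta>
      \<le> \<eta> * linf_variation K l n - (\<Sum>i=1..n. B i) / (4 * \<eta>) - (\<Sum>i=1..n. A i) / (2 * \<eta>)"
    unfolding linf_variation_def
    by (simp add: sum.distrib sum_subtractf sum_distrib_left sum_divide_distrib[symmetric])
  have "\<Phi> 0 = ln (real K)"
    by (simp add: \<Phi>_def cum_loss_def log_sum_exp_def)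
  have comparator: "- \<Phi> n / \<eta> \<le> dot_prod K (cum_loss l n) u"
    unfolding \<Phi>_def by (rule neg_log_sum_exp_le_dot_prod[OF K eta u])
  have "l1_variation K x n \<le> 2 * (\<Sum>i=1..n. A i) + 2 * (\<Sum>i=1..n. B i)"
    unfolding x_def A_def B_def g_def by (rule l1_variation_opt_hedge_le[where l = l, OF init])
  then have "l1_variation K x n / (8 * \<eta>) \<le> (\<Sum>i=1..n. A i) / (4 * \<eta>) + (\<Sum>i=1..n. B i) / (4 * \<eta>)"
    using eta by (simp add: field_simps)
  moreover have "(\<Sum>i=1..n. A i) / (4 * \<eta>) \<le> (\<Sum>i=1..n. A i) / (2 * \<eta>)"
    using eta by (intro divide_left_mono) (auto simp: A_def sum_nonneg)
  moreover have "(\<Sum>i=1..n. dot_prod K (l i) (\<lambda>k. x i k - u k))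
      = (\<Sum>i=1..n. dot_prod K (l i) (x i)) - dot_prod K (cum_loss l n) u"
    unfolding dot_prod_def cum_loss_def
    by (simp add: algebra_simps sum_subtractf sum_distrib_left sum.swap[of _ "{..<K}"])
  ultimately show ?thesis
    using learner comparator \<open>\<Phi> 0 = ln (real K)\<close> unfolding x_def[symmetric]
    by (simp add: diff_divide_distrib)
qed

lemma l1_variation_perturbed_le:
  assumes B: "B \<subseteq> {1..n}"
    and w: "\<And>i. i \<le> n \<Longrightarrow> w i \<in> prob_simplex K" and x: "\<And>i. i \<le> n \<Longrightarrow> x i \<in> prob_simplex K"
    and w_eq: "\<And>i k. i \<le> n \<Longrightarrow> i \<notin> B \<Longrightarrow> k < K \<Longrightarrow> w i k = x i k"
  shows "l1_variation K w n \<le> l1_variation K x n + 8 * card B"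
proof -
  have "(l1_norm K (\<lambda>k. w i k - w (i - 1) k))^2
      \<le> (l1_norm K (\<lambda>k. x i k - x (i - 1) k))^2 + 4 * of_bool (i \<in> B) + 4 * of_bool (i - 1 \<in> B)"
    if "i \<in> {1..n}" for i
  proof (cases "i \<in> B \<or> i - 1 \<in> B")
    case True
    have "(l1_norm K (\<lambda>k. w i k - w (i - 1) k))^2 \<le> 2^2"
      using l1_norm_diff_prob_simplex_le[OF w w] that l1_norm_nonneg by (intro power_mono) auto
    then have "(l1_norm K (\<lambda>k. w i k - w (i - 1) k))^2 \<le> 4" by simp
    moreover have "(4::real) \<le> 4 * of_bool (i \<in> B) + 4 * of_bool (i - 1 \<in> B)"
      using True by auto
    moreover have "0 \<le> (l1_norm K (\<lambda>k. x i k - x (i - 1) k))^2" by simp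
    ultimately show ?thesis by linarith
  next
    case False
    then have "l1_norm K (\<lambda>k. w i k - w (i - 1) k) = l1_norm K (\<lambda>k. x i k - x (i - 1) k)"
      unfolding l1_norm_def using that w_eq by (intro sum.cong) auto
    then show ?thesis using False by simp
  qed
  then have "l1_variation K w n \<le> (\<Sum>i=1..n. (l1_norm K (\<lambda>k. x i k - x (i - 1) k))^2
      + 4 * of_bool (i \<in> B) + 4 * of_bool (i - 1 \<in> B))"
    unfolding l1_variation_def by (intro sum_mono) auto
  also have "\<dots> = l1_variation K x n + 4 * (\<Sum>i=1..n. of_bool (i \<in> B)) + 4 * (\<Sum>i=1..n. of_bool (i - 1 \<in> B))"
    unfolding l1_variation_def by (simp only: sum.distrib sum_distrib_left)
  finally have "l1_variation K w n
      \<le> l1_variation K x n + 4 * (\<Sum>i=1..n. of_bool (i \<in> B)) + 4 * (\<Sum>i=1..n. of_bool (i - 1 \<in> B))" .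
  moreover have "(\<Sum>i=1..n. of_bool (i - 1 \<in> B)) \<le> (\<Sum>i=1..n. of_bool (i \<in> B) :: real)"
    using B by (intro sum_atLeast1_shift_le) auto
  moreover have "(\<Sum>i=1..n. of_bool (i \<in> B) :: real) = card B"
    using B by (simp add: Int_absorb1 Collect_mem_eq)
  ultimately show ?thesis by linarith
qed

lemma dot_prod_diff_prob_simplex_le:
  assumes "1 \<le> K" "p \<in> prob_simplex K" "q \<in> prob_simplex K" "\<And>k. k < K \<Longrightarrow> \<bar>f k\<bar> \<le> 1"
  shows "dot_prod K f (\<lambda>k. p k - q k) \<le> 2"
proof -
  have "dot_prod K f (\<lambda>k. p k - q k) \<le> linf_norm K f * l1_norm K (\<lambda>k. p k - q k)"
    by (rule dot_prod_le_linf_l1)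
  also have "\<dots> \<le> 1 * 2"
    using assms linf_norm_le l1_norm_diff_prob_simplex_le l1_norm_nonneg by (intro mult_mono) auto
  finally show ?thesis by simp
qed

lemma sum_dot_prod_perturbed_le:
  fixes n :: nat
  assumes K: "1 \<le> K" and B: "B \<subseteq> {1..n}"
    and w: "\<And>i. i \<le> n \<Longrightarrow> w i \<in> prob_simplex K" and x: "\<And>i. i \<le> n \<Longrightarrow> x i \<in> prob_simplex K"
    and w_eq: "\<And>i k. i \<le> n \<Longrightarrow> i \<notin> B \<Longrightarrow> k < K \<Longrightarrow> w i k = x i k"
    and bounded: "\<And>i k. i \<in> {1..n} \<Longrightarrow> k < K \<Longrightarrow> \<bar>l i k\<bar> \<le> 1"
  shows "(\<Sum>i=1..n. dot_prod K (l i) (\<lambda>k. w i k - u k))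
    \<le> (\<Sum>i=1..n. dot_prod K (l i) (\<lambda>k. x i k - u k)) + 2 * card B"
proof -
  have "dot_prod K (l i) (\<lambda>k. w i k - u k) \<le> dot_prod K (l i) (\<lambda>k. x i k - u k) + 2 * of_bool (i \<in> B)"
    if "i \<in> {1..n}" for i
  proof -
    have "dot_prod K (l i) (\<lambda>k. w i k - u k)
        = dot_prod K (l i) (\<lambda>k. x i k - u k) + dot_prod K (l i) (\<lambda>k. w i k - x i k)"
      unfolding dot_prod_def by (simp add: algebra_simps sum.distrib[symmetric])
    moreover have "dot_prod K (l i) (\<lambda>k. w i k - x i k) \<le> 2 * of_bool (i \<in> B)"
    proof (cases "i \<in> B")
      case True
      have "dot_prod K (l i) (\<lambda>k. w i k - x i k) \<le> 2"
        using that by (intro dot_prod_diff_prob_simplex_le[OF K w x] bounded) auto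
      then show ?thesis using True by simp
    next
      case False
      then show ?thesis
        unfolding dot_prod_def using that w_eq by (simp add: sum.neutral)
    qed
    ultimately show ?thesis by linarith
  qed
  then have "(\<Sum>i=1..n. dot_prod K (l i) (\<lambda>k. w i k - u k))
      \<le> (\<Sum>i=1..n. dot_prod K (l i) (\<lambda>k. x i k - u k) + 2 * of_bool (i \<in> B))"
    by (intro sum_mono) auto
  also have "\<dots> = (\<Sum>i=1..n. dot_prod K (l i) (\<lambda>k. x i k - u k)) + 2 * card B"
    using B by (simp add: sum.distrib sum_distrib_left[symmetric] Int_absorb1 Collect_mem_eq)
  finally show ?thesis .
qed

text \<open>Rounds in \<open>B\<close> are played arbitrarily: each costs at most \<open>2\<close> in regret and at most \<open>4\<close> in
  each of the two adjacent movement terms, which are then paid for by halving the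
  coefficient \<open>1 / (8 \<eta>)\<close>.\<close>
lemma opt_hedge_regret_perturbed:
  assumes K: "1 \<le> K" and eta: "0 < \<eta>" and u: "u \<in> prob_simplex K" and init: "\<And>k. l 0 k = 0"
    and B: "B \<subseteq> {1..n}"
    and w: "\<And>i. i \<le> n \<Longrightarrow> w i \<in> prob_simplex K"
    and w_eq: "\<And>i k. i \<le> n \<Longrightarrow> i \<notin> B \<Longrightarrow> k < K \<Longrightarrow> w i k = opt_hedge \<eta> K l i k"
    and bounded: "\<And>i k. i \<in> {1..n} \<Longrightarrow> k < K \<Longrightarrow> \<bar>l i k\<bar> \<le> 1"
  shows "(\<Sum>i=1..n. dot_prod K (l i) (\<lambda>k. w i k - u k))
    \<le> ln (real K) / \<eta> + \<eta> * linf_variation K l n - l1_variation K w n / (16 * \<eta>)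
      + (2 + 1 / \<eta>) * card B"
proof -
  define x where "x = opt_hedge \<eta> K l"
  have x: "x i \<in> prob_simplex K" for i
    unfolding x_def by (rule opt_hedge_in_prob_simplex[OF K])
  have "(\<Sum>i=1..n. dot_prod K (l i) (\<lambda>k. w i k - u k))
      \<le> (\<Sum>i=1..n. dot_prod K (l i) (\<lambda>k. x i k - u k)) + 2 * card B"
    by (rule sum_dot_prod_perturbed_le[OF K B w x w_eq[folded x_def] bounded])
  moreover have "(\<Sum>i=1..n. dot_prod K (l i) (\<lambda>k. x i k - u k))
      \<le> ln (real K) / \<eta> + \<eta> * linf_variation K l n - l1_variation K x n / (8 * \<eta>)"
    unfolding x_def by (rule opt_hedge_regret[where l = l, OF K eta u init])
  moreover have "l1_variation K w n / (8 * \<eta>) \<le> (l1_variation K x n + 8 * card B) / (8 * \<eta>)"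
    using l1_variation_perturbed_le[OF B w x w_eq[folded x_def]] eta by (intro divide_right_mono) auto
  moreover have "(l1_variation K x n + 8 * card B) / (8 * \<eta>) = l1_variation K x n / (8 * \<eta>) + card B / \<eta>"
    using eta by (simp add: add_divide_distrib)
  moreover have "l1_variation K w n / (16 * \<eta>) \<le> l1_variation K w n / (8 * \<eta>)"
    using eta l1_variation_nonneg by (intro divide_left_mono) auto
  ultimately show ?thesis by (simp add: algebra_simps)
qed

section \<open>Expected costs against mixed strategies\<close>

lemma profiles_with_action_eq_PiE:
  assumes "j < J" "k < K"
  shows "{a \<in> profiles J K. a j = k} = PiE {..<J} (\<lambda>i. if i = j then {k} else {..<K})"
proof (intro set_eqI iffI)
  fix a assume "a \<in> {a \<in> profiles J K. a j = k}"
  then show "a \<in> PiE {..<J} (\<lambda>i. if i = j then {k} else {..<K})"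
    unfolding profiles_def PiE_iff by simp
next
  fix a assume a: "a \<in> PiE {..<J} (\<lambda>i. if i = j then {k} else {..<K})"
  then have "a j = k"
    using PiE_mem[OF a, of j] assms(1) by simp
  moreover have "a i \<in> {..<K}" if "i < J" for i
    using PiE_mem[OF a, of i] that assms(2) \<open>a j = k\<close> by (cases "i = j") auto
  ultimately show "a \<in> {a \<in> profiles J K. a j = k}"
    using a unfolding profiles_def PiE_iff by simp
qed

lemma sum_prod_mixed_strategies_eq_1:
  assumes "j < J" "k < K" and W: "\<And>i. i < J \<Longrightarrow> i \<noteq> j \<Longrightarrow> W i \<in> prob_simplex K"
  shows "(\<Sum>a\<in>{a \<in> profiles J K. a j = k}. \<Prod>i\<in>{..<J} - {j}. W i (a i)) = 1"
proof -
  define f where "f i x = (if i = j then 1 else W i x)" for i x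
  have "(\<Prod>i\<in>{..<J} - {j}. W i (a i)) = (\<Prod>i<J. f i (a i))" for a :: "nat \<Rightarrow> nat"
    using assms(1) by (simp add: prod.remove[of "{..<J}" j] f_def)
  then have "(\<Sum>a\<in>{a \<in> profiles J K. a j = k}. \<Prod>i\<in>{..<J} - {j}. W i (a i))
      = (\<Sum>a\<in>PiE {..<J} (\<lambda>i. if i = j then {k} else {..<K}). \<Prod>i<J. f i (a i))"
    unfolding profiles_with_action_eq_PiE[OF assms(1,2)] by simp
  also have "\<dots> = (\<Prod>i<J. \<Sum>x\<in>(if i = j then {k} else {..<K}). f i x)"
    by (rule prod_sum_PiE[symmetric]) auto
  also have "\<dots> = 1"
    using W by (intro prod.neutral) (auto simp: f_def prob_simplex_def)
  finally show ?thesis .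
qed

lemma Phi_mat_inner_le:
  assumes "j < J" "k < K" and W: "\<And>i. i < J \<Longrightarrow> i \<noteq> j \<Longrightarrow> W i \<in> prob_simplex K"
    and bounded: "\<And>a. a \<in> profiles J K \<Longrightarrow> \<bar>\<phi> j a \<bullet> z\<bar> \<le> 1"
  shows "\<bar>Phi_mat J K \<phi> j W k \<bullet> z\<bar> \<le> 1"
proof -
  define A where "A = {a \<in> profiles J K. a j = k}"
  define c where "c a = (\<Prod>i\<in>{..<J} - {j}. W i (a i))" for a
  have c_nonneg: "0 \<le> c a" if "a \<in> A" for a
    unfolding c_def using that W
    by (intro prod_nonneg) (auto simp: A_def profiles_def PiE_iff prob_simplex_def)
  have "\<bar>Phi_mat J K \<phi> j W k \<bullet> z\<bar> = \<bar>\<Sum>a\<in>A. c a * (\<phi> j a \<bullet> z)\<bar>"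
    unfolding Phi_mat_def A_def c_def by (simp add: inner_sum_left)
  also have "\<dots> \<le> (\<Sum>a\<in>A. \<bar>c a * (\<phi> j a \<bullet> z)\<bar>)"
    by (rule sum_abs)
  also have "\<dots> \<le> (\<Sum>a\<in>A. c a)"
    using c_nonneg bounded by (intro sum_mono) (auto simp: abs_mult A_def intro: mult_left_le)
  also have "\<dots> = 1"
    unfolding A_def c_def by (rule sum_prod_mixed_strategies_eq_1[OF assms(1,2) W])
  finally show ?thesis .
qed

section \<open>POMWU as optimistic Hedge on each context\<close>

lemma fst_pomwu_state:
  "fst (pomwu_state \<eta> K Zs Phis t) z
    = (\<lambda>k. exp (- \<eta> * (\<Sum>s\<in>{s. s < t \<and> Zs s = z}. Phis s k \<bullet> z)) / real K)"
proof (induction t)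
  case (Suc t)
  have "{s. s < Suc t \<and> Zs s = z}
      = (if Zs t = z then insert t {s. s < t \<and> Zs s = z} else {s. s < t \<and> Zs s = z})"
    by (auto simp: less_Suc_eq)
  then show ?case
    using Suc.IH by (auto simp: split_beta fun_eq_iff algebra_simps exp_add[symmetric])
qed simp

lemma snd_pomwu_state:
  "snd (pomwu_state \<eta> K Zs Phis t) z
    = (if \<exists>s<t. Zs s = z then Phis (Max {s. s < t \<and> Zs s = z}) else (\<lambda>k. 0))"
proof (induction t)
  case (Suc t)
  show ?case
  proof (cases "Zs t = z")
    case True
    then have "{s. s < Suc t \<and> Zs s = z} = insert t {s. s < t \<and> Zs s = z}"
      by (auto simp: less_Suc_eq)
    moreover have "Max (insert t {s. s < t \<and> Zs s = z}) = t"
      by (rule Max_eqI) auto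
    ultimately show ?thesis using True by (auto simp: split_beta)
  next
    case False
    then have "{s. s < Suc t \<and> Zs s = z} = {s. s < t \<and> Zs s = z}"
      "(\<exists>s<Suc t. Zs s = z) \<longleftrightarrow> (\<exists>s<t. Zs s = z)"
      by (auto simp: less_Suc_eq)
    then show ?thesis using Suc.IH False by (auto simp: split_beta)
  qed
qed simp

lemma pomwu_weights_eq_softmax:
  assumes "1 \<le> K"
  shows "pomwu_weights \<eta> K Zs Phis Zhat t = softmax K (\<lambda>k. - \<eta> *
    ((\<Sum>s\<in>{s. s < t \<and> Zs s = Zhat t}. Phis s k \<bullet> Zhat t)
      + snd (pomwu_state \<eta> K Zs Phis t) (Zhat t) k \<bullet> Zhat t))"
proof -
  have "exp a / real K / (\<Sum>k<K. exp (b k) / real K) = exp a / (\<Sum>k<K. exp (b k))" for a b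
    using assms by (simp add: sum_divide_distrib[symmetric])
  then show ?thesis
    unfolding pomwu_weights_def softmax_def
    by (simp add: split_beta fst_pomwu_state fun_eq_iff algebra_simps exp_add[symmetric] mult_exp_exp)
qed

lemma sorted_wrt_less_nth_less_iff:
  fixes xs :: "'a::linorder list"
  assumes "sorted_wrt (<) xs" "i < length xs" "j < length xs"
  shows "xs ! i < xs ! j \<longleftrightarrow> i < j"
proof
  assume "xs ! i < xs ! j"
  show "i < j"
  proof (rule ccontr)
    assume "\<not> i < j"
    then have "j < i \<or> j = i" by auto
    then show False
      using sorted_wrt_nth_less[OF assms(1), of j i] assms \<open>xs ! i < xs ! j\<close> by auto
  qed
next
  assume "i < j" then show "xs ! i < xs ! j" using assms sorted_wrt_nth_less by blast
qed

lemma Max_set_take_sorted: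
  fixes xs :: "'a::linorder list"
  assumes "sorted_wrt (<) xs" "0 < j" "j \<le> length xs"
  shows "Max (set (take j xs)) = xs ! (j - 1)"
proof (rule Max_eqI)
  show "xs ! (j - 1) \<in> set (take j xs)"
    using assms by (auto simp: in_set_conv_nth intro: exI[of _ "j - 1"])
  fix y assume "y \<in> set (take j xs)"
  then obtain r where "r < j" "y = xs ! r" using assms(3) by (auto simp: in_set_conv_nth)
  show "y \<le> xs ! (j - 1)"
  proof (cases "r = j - 1")
    case False
    then have "r < j - 1" using \<open>r < j\<close> by simp
    moreover have "j - 1 < length xs" using assms(2,3) by simp
    ultimately show ?thesis
      using sorted_wrt_nth_less[OF assms(1), of r "j - 1"] \<open>y = xs ! r\<close> by simp
  qed (use \<open>y = xs ! r\<close> in simp)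
qed simp

lemma set_occ_rounds: "set (occ_rounds T Zs z) = {t. t < T \<and> Zs t = z}"
  unfolding occ_rounds_def by simp

lemma sorted_occ_rounds: "sorted_wrt (<) (occ_rounds T Zs z)"
  unfolding occ_rounds_def by simp

lemma distinct_occ_rounds: "distinct (occ_rounds T Zs z)"
  unfolding occ_rounds_def by simp

lemma occ_rounds_nth:
  assumes "j < length (occ_rounds T Zs z)"
  shows "occ_rounds T Zs z ! j < T \<and> Zs (occ_rounds T Zs z ! j) = z"
  using nth_mem[OF assms] unfolding set_occ_rounds by simp

lemma occ_rounds_before:
  assumes j: "j < length (occ_rounds T Zs z)"
  shows "{s. s < occ_rounds T Zs z ! j \<and> Zs s = z} = set (take j (occ_rounds T Zs z))"
proof -
  define ts where "ts = occ_rounds T Zs z"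
  have "s \<in> {s. s < ts ! j \<and> Zs s = z} \<longleftrightarrow> (\<exists>r<j. s = ts ! r)" for s
  proof
    assume s: "s \<in> {s. s < ts ! j \<and> Zs s = z}"
    then have "s \<in> set ts"
      using occ_rounds_nth[OF j] set_occ_rounds unfolding ts_def by fastforce
    then obtain r where r: "r < length ts" "s = ts ! r" by (auto simp: in_set_conv_nth)
    then have "r < j"
      using s j sorted_wrt_less_nth_less_iff[OF sorted_occ_rounds, of r T Zs z j] unfolding ts_def by simp
    then show "\<exists>r<j. s = ts ! r" using r by blast
  next
    assume "\<exists>r<j. s = ts ! r"
    then show "s \<in> {s. s < ts ! j \<and> Zs s = z}"
      using j occ_rounds_nth sorted_wrt_nth_less[OF sorted_occ_rounds] unfolding ts_def by fastforce
  qed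
  moreover have "set (take j ts) = {s. \<exists>r<j. s = ts ! r}"
  proof (intro set_eqI iffI)
    fix s assume "s \<in> set (take j ts)"
    then obtain r where "r < j" "s = take j ts ! r" using j by (auto simp: in_set_conv_nth)
    then show "s \<in> {s. \<exists>r<j. s = ts ! r}" by auto
  next
    fix s assume "s \<in> {s. \<exists>r<j. s = ts ! r}"
    then obtain r where "r < j" "s = ts ! r" by blast
    then show "s \<in> set (take j ts)"
      using j unfolding ts_def by (auto simp: in_set_conv_nth intro!: exI[of _ r])
  qed
  ultimately show ?thesis unfolding ts_def by blast
qed

lemma sum_rounds_by_context:
  fixes f :: "nat \<Rightarrow> 'a \<Rightarrow> real"
  assumes "finite Zset" "\<forall>t<T. Zs t \<in> Zset"
  shows "(\<Sum>t<T. f t (Zs t)) = (\<Sum>z\<in>Zset. \<Sum>i=1..length (occ_rounds T Zs z). f (occ_rounds T Zs z ! (i - 1)) z)"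
proof -
  have "(\<Sum>t<T. f t (Zs t)) = (\<Sum>t<T. \<Sum>z\<in>Zset. if Zs t = z then f t z else 0)"
    using assms by (intro sum.cong) (auto simp: sum.delta')
  also have "\<dots> = (\<Sum>z\<in>Zset. \<Sum>t\<in>set (occ_rounds T Zs z). f t z)"
    by (subst sum.swap) (simp add: set_occ_rounds sum.inter_filter[symmetric])
  also have "\<dots> = (\<Sum>z\<in>Zset. \<Sum>i=1..length (occ_rounds T Zs z). f (occ_rounds T Zs z ! (i - 1)) z)"
    by (simp add: sum.distinct_set_conv_list[OF distinct_occ_rounds] sum_list_sum_nth
        atLeast0LessThan sum.atLeast1_atMost_eq)
  finally show ?thesis .
qed

lemma sum_rounds_before_occ:
  assumes "j < length (occ_rounds T Zs z)"
  shows "(\<Sum>s\<in>{s. s < occ_rounds T Zs z ! j \<and> Zs s = z}. f s) = (\<Sum>r<j. f (occ_rounds T Zs z ! r))"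
  using assms distinct_occ_rounds[of T Zs z] unfolding occ_rounds_before[OF assms]
  by (simp add: sum.distinct_set_conv_list sum_list_sum_nth atLeast0LessThan min_absorb1)

lemma snd_pomwu_state_at_occ:
  assumes j: "j < length (occ_rounds T Zs z)"
  shows "snd (pomwu_state \<eta> K Zs Phis (occ_rounds T Zs z ! j)) z = at_occ Phis (\<lambda>_. 0) (occ_rounds T Zs z) j"
proof (cases "j = 0")
  case True
  then have "\<not> (\<exists>s<occ_rounds T Zs z ! j. Zs s = z)"
    using occ_rounds_before[OF j] by auto
  then have "snd (pomwu_state \<eta> K Zs Phis (occ_rounds T Zs z ! j)) z = (\<lambda>k. 0)"
    by (simp only: snd_pomwu_state if_not_P if_False)
  then show ?thesis using True by (simp add: at_occ_def)
next
  case False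
  have "occ_rounds T Zs z ! (j - 1) \<in> set (take j (occ_rounds T Zs z))"
    using False j by (auto simp: in_set_conv_nth intro!: exI[of _ "j - 1"])
  then have "\<exists>s<occ_rounds T Zs z ! j. Zs s = z"
    unfolding occ_rounds_before[OF j, symmetric] by blast
  moreover have "Max {s. s < occ_rounds T Zs z ! j \<and> Zs s = z} = occ_rounds T Zs z ! (j - 1)"
    unfolding occ_rounds_before[OF j] using False j by (simp add: Max_set_take_sorted sorted_occ_rounds)
  ultimately show ?thesis
    using False by (simp add: snd_pomwu_state at_occ_def)
qed

lemma pomwu_weights_at_occ_eq_opt_hedge:
  fixes Phis :: "nat \<Rightarrow> nat \<Rightarrow> real^'d" and z :: "real^'d"
  assumes K: "1 \<le> K" and i: "i \<in> {1..length (occ_rounds T Zs z)}"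
    and correct: "Zhat (occ_rounds T Zs z ! (i - 1)) = z"
  shows "pomwu_weights \<eta> K Zs Phis Zhat (occ_rounds T Zs z ! (i - 1))
    = opt_hedge \<eta> K (\<lambda>i k. at_occ Phis (\<lambda>_. 0) (occ_rounds T Zs z) i k \<bullet> z) i"
proof -
  define l where "l i k = at_occ Phis (\<lambda>_. 0) (occ_rounds T Zs z) i k \<bullet> z" for i k
  have j: "i - 1 < length (occ_rounds T Zs z)" using i by auto
  have "(\<Sum>s\<in>{s. s < occ_rounds T Zs z ! (i - 1) \<and> Zs s = z}. Phis s k \<bullet> z) = cum_loss l (i - 1) k" for k
    using sum_rounds_before_occ[OF j, of "\<lambda>s. Phis s k \<bullet> z"] sum.atLeast1_atMost_eq[of "\<lambda>i. l i k" "i - 1"]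
    by (simp add: cum_loss_def l_def at_occ_def)
  moreover have "snd (pomwu_state \<eta> K Zs Phis (occ_rounds T Zs z ! (i - 1))) z k \<bullet> z = l (i - 1) k" for k
    using snd_pomwu_state_at_occ[OF j] by (simp add: l_def)
  ultimately show ?thesis
    using correct by (simp add: pomwu_weights_eq_softmax[OF K] opt_hedge_def l_def[abs_def])
qed

lemma pomwu_regret_on_context:
  fixes Phis :: "nat \<Rightarrow> nat \<Rightarrow> real^'d" and z :: "real^'d" and Zhat :: "nat \<Rightarrow> real^'d"
  assumes K: "1 \<le> K" and eta: "0 < \<eta>" and u: "u \<in> prob_simplex K"
    and bounded: "\<And>t k. t < T \<Longrightarrow> k < K \<Longrightarrow> \<bar>Phis t k \<bullet> Zs t\<bar> \<le> 1"
  defines "ts \<equiv> occ_rounds T Zs z"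
  defines "l \<equiv> \<lambda>i k. at_occ Phis (\<lambda>_. 0) ts i k \<bullet> z"
    and "w \<equiv> at_occ (pomwu_weights \<eta> K Zs Phis Zhat) (\<lambda>_. 1 / real K) ts"
  shows "(\<Sum>i=1..length ts. dot_prod K (l i) (\<lambda>k. w i k - u k))
    \<le> ln (real K) / \<eta> + \<eta> * linf_variation K l (length ts) - l1_variation K w (length ts) / (16 * \<eta>)
      + (2 + 1 / \<eta>) * card {i \<in> {1..length ts}. Zhat (ts ! (i - 1)) \<noteq> z}"
proof (rule opt_hedge_regret_perturbed[OF K eta u])
  show "l 0 k = 0" for k by (simp add: l_def at_occ_def)
  have uniform: "(\<lambda>_. 1 / real K) = opt_hedge \<eta> K l 0"
    by (simp add: opt_hedge_def cum_loss_def l_def at_occ_def softmax_const[OF K])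
  show "w i \<in> prob_simplex K" if "i \<le> length ts" for i
    by (cases "i = 0") (simp_all add: w_def at_occ_def uniform opt_hedge_in_prob_simplex[OF K]
        pomwu_weights_eq_softmax[OF K] softmax_in_prob_simplex[OF K])
  show "w i k = opt_hedge \<eta> K l i k"
    if "i \<le> length ts" "i \<notin> {i \<in> {1..length ts}. Zhat (ts ! (i - 1)) \<noteq> z}" for i k
    using that pomwu_weights_at_occ_eq_opt_hedge[OF K, of i T Zs z Zhat \<eta> Phis]
    by (cases "i = 0") (auto simp: w_def at_occ_def uniform l_def ts_def)
  show "\<bar>l i k\<bar> \<le> 1" if "i \<in> {1..length ts}" "k < K" for i k
    using that occ_rounds_nth[of "i - 1" T Zs z] bounded[of "ts ! (i - 1)" k]
    by (auto simp: l_def at_occ_def ts_def)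
qed auto

lemma lincost_diff:
  "lincost K Phi w Z - lincost K Phi v Z = dot_prod K (\<lambda>k. Phi k \<bullet> Z) (\<lambda>k. w k - v k)"
  unfolding lincost_def dot_prod_def by (simp add: algebra_simps sum_subtractf)

lemma card_mispredictions_by_context:
  fixes Zs Zhat :: "nat \<Rightarrow> 'a"
  assumes "finite Zset" "\<forall>t<T. Zs t \<in> Zset"
  shows "real (card {t. t < T \<and> Zhat t \<noteq> Zs t})
    = (\<Sum>z\<in>Zset. real (card {i \<in> {1..length (occ_rounds T Zs z)}. Zhat (occ_rounds T Zs z ! (i - 1)) \<noteq> z}))"
proof -
  have "real (card {t. t < T \<and> Zhat t \<noteq> Zs t}) = (\<Sum>t<T. of_bool (Zhat t \<noteq> Zs t))"
    by (simp add: Int_def lessThan_def)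
  also have "\<dots> = (\<Sum>z\<in>Zset. \<Sum>i=1..length (occ_rounds T Zs z). of_bool (Zhat (occ_rounds T Zs z ! (i - 1)) \<noteq> z))"
    by (rule sum_rounds_by_context[OF assms, of "\<lambda>t z. of_bool (Zhat t \<noteq> z)"])
  also have "\<dots> = (\<Sum>z\<in>Zset. real (card {i \<in> {1..length (occ_rounds T Zs z)}. Zhat (occ_rounds T Zs z ! (i - 1)) \<noteq> z}))"
    by (simp add: Int_def)
  finally show ?thesis .
qed

lemma contextual_regret_le:
  assumes "1 \<le> K"
    and "\<And>\<pi>. \<forall>z\<in>Zset. \<pi> z \<in> prob_simplex K \<Longrightarrow>
      (\<Sum>t<T. lincost K (Phis t) (w t) (Zs t)) - (\<Sum>t<T. lincost K (Phis t) (\<pi> (Zs t)) (Zs t)) \<le> R"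
  shows "contextual_regret K Zset T Zs Phis w \<le> R"
proof -
  have "(\<lambda>_. softmax K (\<lambda>_. 0)) \<in> {\<pi>. \<forall>z\<in>Zset. \<pi> z \<in> prob_simplex K}"
    using softmax_in_prob_simplex[OF assms(1)] by simp
  then have "(\<Sum>t<T. lincost K (Phis t) (w t) (Zs t)) - R
      \<le> (INF \<pi>\<in>{\<pi>. \<forall>z\<in>Zset. \<pi> z \<in> prob_simplex K}. \<Sum>t<T. lincost K (Phis t) (\<pi> (Zs t)) (Zs t))"
    using assms(2) by (intro cINF_greatest) (auto simp: algebra_simps)
  then show ?thesis unfolding contextual_regret_def by linarith
qed

lemma pomwu_contextual_regret_le:
  fixes Phis :: "nat \<Rightarrow> nat \<Rightarrow> real^'d" and Zs Zhat :: "nat \<Rightarrow> real^'d"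
  assumes K: "1 \<le> K" and eta: "0 < \<eta>" and Zset: "finite Zset" "\<forall>t<T. Zs t \<in> Zset"
    and bounded: "\<And>t k. t < T \<Longrightarrow> k < K \<Longrightarrow> \<bar>Phis t k \<bullet> Zs t\<bar> \<le> 1"
  defines "w \<equiv> pomwu_weights \<eta> K Zs Phis Zhat"
  shows "contextual_regret K Zset T Zs Phis w
    \<le> real (card Zset) * ln (real K) / \<eta>
      + \<eta> * (\<Sum>z\<in>Zset. linf_variation K (\<lambda>i k. at_occ Phis (\<lambda>_. 0) (occ_rounds T Zs z) i k \<bullet> z)
                          (length (occ_rounds T Zs z)))
      - (\<Sum>z\<in>Zset. l1_variation K (at_occ w (\<lambda>_. 1 / real K) (occ_rounds T Zs z))
                     (length (occ_rounds T Zs z))) / (16 * \<eta>)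
      + (2 + 1 / \<eta>) * real (card {t. t < T \<and> Zhat t \<noteq> Zs t})" (is "_ \<le> ?R")
proof (rule contextual_regret_le[OF K])
  fix \<pi> assume \<pi>: "\<forall>z\<in>Zset. \<pi> z \<in> prob_simplex K"
  have "(\<Sum>t<T. lincost K (Phis t) (w t) (Zs t)) - (\<Sum>t<T. lincost K (Phis t) (\<pi> (Zs t)) (Zs t))
      = (\<Sum>z\<in>Zset. \<Sum>i=1..length (occ_rounds T Zs z).
          dot_prod K (\<lambda>k. at_occ Phis (\<lambda>_. 0) (occ_rounds T Zs z) i k \<bullet> z)
            (\<lambda>k. at_occ w (\<lambda>_. 1 / real K) (occ_rounds T Zs z) i k - \<pi> z k))"
    unfolding sum_subtractf[symmetric] lincost_diff
      sum_rounds_by_context[OF Zset, of "\<lambda>t z. dot_prod K (\<lambda>k. Phis t k \<bullet> z) (\<lambda>k. w t k - \<pi> z k)"]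
    by (intro sum.cong refl) (simp add: at_occ_def)
  also have "\<dots> \<le> (\<Sum>z\<in>Zset. ln (real K) / \<eta>
      + \<eta> * linf_variation K (\<lambda>i k. at_occ Phis (\<lambda>_. 0) (occ_rounds T Zs z) i k \<bullet> z) (length (occ_rounds T Zs z))
      - l1_variation K (at_occ w (\<lambda>_. 1 / real K) (occ_rounds T Zs z)) (length (occ_rounds T Zs z)) / (16 * \<eta>)
      + (2 + 1 / \<eta>) * card {i \<in> {1..length (occ_rounds T Zs z)}. Zhat (occ_rounds T Zs z ! (i - 1)) \<noteq> z})"
    unfolding w_def using \<pi> by (intro sum_mono pomwu_regret_on_context[OF K eta _ bounded]) auto
  also have "\<dots> = ?R"
    unfolding card_mispredictions_by_context[OF Zset]
    by (simp add: sum.distrib sum_subtractf sum_distrib_left sum_divide_distrib[symmetric])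
  finally show "(\<Sum>t<T. lincost K (Phis t) (w t) (Zs t)) - (\<Sum>t<T. lincost K (Phis t) (\<pi> (Zs t)) (Zs t))
      \<le> ?R" .
qed

lemma regret_bound_relax:
  fixes \<eta> L c m X Y :: real
  assumes "0 < \<eta>" "0 \<le> L" "0 \<le> c"
  shows "m * c / \<eta> + \<eta> * X - Y / (16 * \<eta>) + (2 + 1 / \<eta>) * L
    \<le> ((5 + c) * L + m * c) / \<eta> + \<eta> * (X + 4 * L) - 1 / (16 * \<eta>) * Y"
proof -
  have "0 \<le> (\<eta> - 1)^2" by simp
  then have "2 \<le> \<eta> + 1 / \<eta>"
    using assms(1) by (simp add: field_simps power2_eq_square)
  moreover have "(5 + c) / \<eta> = 5 * (1 / \<eta>) + c / \<eta>" "0 \<le> c / \<eta>" "0 < 1 / \<eta>"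
    using assms by (simp_all add: add_divide_distrib)
  ultimately have "2 + 1 / \<eta> \<le> (5 + c) / \<eta> + 4 * \<eta>"
    using assms(1) by linarith
  then have "(2 + 1 / \<eta>) * L \<le> ((5 + c) / \<eta> + 4 * \<eta>) * L"
    using assms(2) by (rule mult_right_mono)
  then show ?thesis
    by (simp add: algebra_simps add_divide_distrib)
qed

theorem proposition5:
  fixes J K j T :: nat and \<eta> :: real
    and \<phi> :: "nat \<Rightarrow> (nat \<Rightarrow> nat) \<Rightarrow> real^'d"
    and Zset :: "(real^'d) set"
    and Zs Zhat :: "nat \<Rightarrow> real^'d"
    and W :: "nat \<Rightarrow> nat \<Rightarrow> nat \<Rightarrow> real"
    and Phis :: "nat \<Rightarrow> nat \<Rightarrow> real^'d"
    and w :: "nat \<Rightarrow> nat \<Rightarrow> real"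
    and L m :: nat
  assumes "1 \<le> J" and "j < J" and "1 \<le> K"
    and "finite Zset"
    and bounded_cost: "\<forall>i<J. \<forall>a\<in>profiles J K. \<forall>Z\<in>Zset. \<bar>\<phi> i a \<bullet> Z\<bar> \<le> 1"
    and "\<eta> > 0"
    and "\<forall>t<T. Zs t \<in> Zset" and "\<forall>t<T. Zhat t \<in> Zset"
    and "\<forall>t<T. \<forall>i<J. i \<noteq> j \<longrightarrow> W t i \<in> prob_simplex K"
  defines "Phis \<equiv> (\<lambda>t. Phi_mat J K \<phi> j (W t))"
    and "w \<equiv> pomwu_weights \<eta> K Zs Phis Zhat"
    and "L \<equiv> card {t. t < T \<and> Zhat t \<noteq> Zs t}"
    and "m \<equiv> card Zset"
  shows "contextual_regret K Zset T Zs Phis w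
    \<le> ((5 + ln (real K)) * real L + real m * ln (real K)) / \<eta>
      + \<eta> * ((\<Sum>z\<in>Zset. \<Sum>i=1..length (occ_rounds T Zs z).
                (linf_norm K (\<lambda>k. (at_occ Phis (\<lambda>_. 0) (occ_rounds T Zs z) i k
                                   - at_occ Phis (\<lambda>_. 0) (occ_rounds T Zs z) (i - 1) k) \<bullet> z))\<^sup>2)
             + 4 * real L)
      - 1 / (16 * \<eta>) * (\<Sum>z\<in>Zset. \<Sum>i=1..length (occ_rounds T Zs z).
                (l1_norm K (\<lambda>k. at_occ w (\<lambda>_. 1 / real K) (occ_rounds T Zs z) i k
                               - at_occ w (\<lambda>_. 1 / real K) (occ_rounds T Zs z) (i - 1) k))\<^sup>2)"
proof -
  have bounded: "\<bar>Phis t k \<bullet> Zs t\<bar> \<le> 1" if "t < T" "k < K" for t k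
    unfolding Phis_def using assms(2,7,9) bounded_cost that by (intro Phi_mat_inner_le) auto
  note regret = pomwu_contextual_regret_le[where Phis = Phis and Zhat = Zhat,
      OF \<open>1 \<le> K\<close> \<open>\<eta> > 0\<close> \<open>finite Zset\<close> assms(7) bounded]
  have "0 \<le> ln (real K)" using \<open>1 \<le> K\<close> by simp
  from order_trans[OF regret regret_bound_relax[OF \<open>\<eta> > 0\<close> of_nat_0_le_iff this]] show ?thesis
    unfolding w_def[symmetric] L_def[symmetric] m_def[symmetric] linf_variation_def l1_variation_def
    by (simp add: inner_diff_left)
qed

end
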